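(* Let $G$ be a finite subset of $\mathbf M$ with $\{(\mathbf e_1,f_1),\dots,(\mathbf e_m,f_m)\}\subset G$, and let $(\mathbf u,f)\in\mathbf M$. Suppose that for every critical pair $[t_g(\mathbf v,g),t_h(\mathbf w,h)]$ of $G$ with $\mathrm{lpp}(\mathbf u)\succeq\mathrm{lpp}(t_g\mathbf v)$, the S-polynomial of this critical pair has a standard representation w.r.t. $G$. Then $(\mathbf u,f)$ has a standard representation w.r.t. $G$.
   Context: Let $R=K[x_1,\dots,x_n]$ over a field $K$, $f_1,\dots,f_m\in R$, $\mathbf f=(f_1,\dots,f_m)$, $\mathbf e_i$ the $i$-th unit vector of $R^m$, and $\mathbf M=\{(\mathbf u,f)\in R^m\times R:\mathbf u\cdot\mathbf f=f\}$. Fix an arbitrary term order $\prec$ on the power products of $R$ and an arbitrary term order $\prec$ on the terms $x^\alpha\mathbf e_i$ of $R^m$. $\mathrm{lpp}$ denotes leading power product (leading term for vectors), $\mathrm{lc}$ leading coefficient; $\mathrm{lpp}(0)=0$ is smaller than every nonzero power product/term. For $(\mathbf u,f),(\mathbf v,g)\in\mathbf M$ with $f,g\neq0$, let $t=\mathrm{lcm}(\mathrm{lpp}(f),\mathrm{lpp}(g))$, $t_f=t/\mathrm{lpp}(f)$, $t_g=t/\mathrm{lpp}(g)$; if $\mathrm{lpp}(t_f\mathbf u)\succeq\mathrm{lpp}(t_g\mathbf v)$, then $[t_f(\mathbf u,f),t_g(\mathbf v,g)]$ is a critical pair (of $G$ if both elements lie in $G$) with S-polynomial $t_f(\mathbf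 u,f)-c\,t_g(\mathbf v,g)$, $c=\mathrm{lc}(f)/\mathrm{lc}(g)$. An element $(\mathbf u,f)\in\mathbf M$ has a standard representation w.r.t. $B\subset\mathbf M$ if $(\mathbf u,f)=\sum_{i=1}^s p_i(\mathbf v_i,g_i)$ with $(\mathbf v_i,g_i)\in B$, $p_i\in R$, $\mathrm{lpp}(\mathbf u)\succeq\mathrm{lpp}(p_i\mathbf v_i)$ and $\mathrm{lpp}(f)\succeq\mathrm{lpp}(p_ig_i)$ for all $i$. *)

theory Defs
  imports "HOL-Library.Poly_Mapping"
begin

type_synonym 'v pp = "'v \<Rightarrow>\<^sub>0 nat"
type_synonym ('v, 'k) mpoly = "'v pp \<Rightarrow>\<^sub>0 'k"
(* Vectors in R^m: functions from indices (0..m-1) to polynomials, zero beyond m *)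
type_synonym ('v, 'k) vec = "nat \<Rightarrow> ('v, 'k) mpoly"

definition pp_term_order :: "('v pp \<Rightarrow> 'v pp \<Rightarrow> bool) \<Rightarrow> bool" where
  "pp_term_order ord \<longleftrightarrow>
     (\<forall>s. ord s s) \<and> (\<forall>s t. ord s t \<and> ord t s \<longrightarrow> s = t) \<and>
     (\<forall>s t u. ord s t \<and> ord t u \<longrightarrow> ord s u) \<and> (\<forall>s t. ord s t \<or> ord t s) \<and>
     (\<forall>t. ord 0 t) \<and> (\<forall>s t u. ord s t \<longrightarrow> ord (s + u) (t + u))"

(* term order on module terms x^alpha e_i (represented as pairs (alpha, i)) *)
definition mod_term_order :: "('v pp \<times> nat \<Rightarrow> 'v pp \<times> nat \<Rightarrow> bool) \<Rightarrow> bool" where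
  "mod_term_order ord \<longleftrightarrow>
     (\<forall>s. ord s s) \<and> (\<forall>s t. ord s t \<and> ord t s \<longrightarrow> s = t) \<and>
     (\<forall>s t u. ord s t \<and> ord t u \<longrightarrow> ord s u) \<and> (\<forall>s t. ord s t \<or> ord t s) \<and>
     (\<forall>a i c. ord (a, i) (a + c, i)) \<and>
     (\<forall>a i b j c. ord (a, i) (b, j) \<longrightarrow> ord (a + c, i) (b + c, j))"

definition poly_terms :: "('v, 'k::zero) mpoly \<Rightarrow> 'v pp set" where
  "poly_terms p = Poly_Mapping.keys p"

definition vec_terms :: "('v, 'k::zero) vec \<Rightarrow> ('v pp \<times> nat) set" where
  "vec_terms u = {(a, i). a \<in> Poly_Mapping.keys (u i)}"

definition lt_of :: "('t \<Rightarrow> 't \<Rightarrow> bool) \<Rightarrow> 't set \<Rightarrow> 't" where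
  "lt_of ord T = (THE t. t \<in> T \<and> (\<forall>s\<in>T. ord s t))"

(* lpp(x) \<succeq> lpp(y), where the objects are given by their term sets; lpp(0) is below
   every nonzero term *)
definition lpp_ge :: "('t \<Rightarrow> 't \<Rightarrow> bool) \<Rightarrow> 't set \<Rightarrow> 't set \<Rightarrow> bool" where
  "lpp_ge ord T S \<longleftrightarrow> S = {} \<or> (T \<noteq> {} \<and> ord (lt_of ord S) (lt_of ord T))"

definition lpp :: "('v pp \<Rightarrow> 'v pp \<Rightarrow> bool) \<Rightarrow> ('v, 'k::zero) mpoly \<Rightarrow> 'v pp" where
  "lpp ord p = lt_of ord (Poly_Mapping.keys p)"

definition lc :: "('v pp \<Rightarrow> 'v pp \<Rightarrow> bool) \<Rightarrow> ('v, 'k::zero) mpoly \<Rightarrow> 'k" where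
  "lc ord p = Poly_Mapping.lookup p (lpp ord p)"

definition pp_monom :: "'v pp \<Rightarrow> ('v, 'k::{zero,one}) mpoly" where
  "pp_monom t = Poly_Mapping.single t 1"

definition pp_lcm :: "'v pp \<Rightarrow> 'v pp \<Rightarrow> 'v pp" where
  "pp_lcm s t = s + (t - s)"

definition smul :: "('v, 'k::comm_ring_1) mpoly \<Rightarrow> ('v, 'k) vec \<times> ('v, 'k) mpoly
                     \<Rightarrow> ('v, 'k) vec \<times> ('v, 'k) mpoly" where
  "smul p x = ((\<lambda>i. p * fst x i), p * snd x)"

definition pair_add :: "('v, 'k::comm_ring_1) vec \<times> ('v, 'k) mpoly
                     \<Rightarrow> ('v, 'k) vec \<times> ('v, 'k) mpoly \<Rightarrow> ('v, 'k) vec \<times> ('v, 'k) mpoly" where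
  "pair_add x y = ((\<lambda>i. fst x i + fst y i), snd x + snd y)"

definition pair_diff :: "('v, 'k::comm_ring_1) vec \<times> ('v, 'k) mpoly
                     \<Rightarrow> ('v, 'k) vec \<times> ('v, 'k) mpoly \<Rightarrow> ('v, 'k) vec \<times> ('v, 'k) mpoly" where
  "pair_diff x y = ((\<lambda>i. fst x i - fst y i), snd x - snd y)"

definition Mset :: "nat \<Rightarrow> (nat \<Rightarrow> ('v, 'k::comm_ring_1) mpoly)
                    \<Rightarrow> (('v, 'k) vec \<times> ('v, 'k) mpoly) set" where
  "Mset m fs = {(u, f). (\<forall>i\<ge>m. u i = 0) \<and> (\<Sum>i<m. u i * fs i) = f}"

definition unitv :: "nat \<Rightarrow> ('v, 'k::comm_ring_1) vec" where
  "unitv i = (\<lambda>j. if j = i then 1 else 0)"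

definition std_rep ::
  "('v pp \<Rightarrow> 'v pp \<Rightarrow> bool) \<Rightarrow> ('v pp \<times> nat \<Rightarrow> 'v pp \<times> nat \<Rightarrow> bool)
   \<Rightarrow> (('v, 'k::comm_ring_1) vec \<times> ('v, 'k) mpoly) set
   \<Rightarrow> ('v, 'k) vec \<times> ('v, 'k) mpoly \<Rightarrow> bool" where
  "std_rep ordp ordm B x \<longleftrightarrow>
     (\<exists>ps :: (('v, 'k) mpoly \<times> (('v, 'k) vec \<times> ('v, 'k) mpoly)) list.
        (\<forall>(p, b) \<in> set ps. b \<in> B \<and>
            lpp_ge ordm (vec_terms (fst x)) (vec_terms (fst (smul p b))) \<and>
            lpp_ge ordp (poly_terms (snd x)) (poly_terms (snd (smul p b)))) \<and>
        x = foldr (\<lambda>(p, b) acc. pair_add (smul p b) acc) ps ((\<lambda>_. 0), 0))"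

definition crit_pair ::
  "('v pp \<Rightarrow> 'v pp \<Rightarrow> bool) \<Rightarrow> ('v pp \<times> nat \<Rightarrow> 'v pp \<times> nat \<Rightarrow> bool)
   \<Rightarrow> ('v, 'k::field) vec \<times> ('v, 'k) mpoly \<Rightarrow> ('v, 'k) vec \<times> ('v, 'k) mpoly \<Rightarrow> bool" where
  "crit_pair ordp ordm x y \<longleftrightarrow> snd x \<noteq> 0 \<and> snd y \<noteq> 0 \<and>
     (let t = pp_lcm (lpp ordp (snd x)) (lpp ordp (snd y));
          tx = t - lpp ordp (snd x); ty = t - lpp ordp (snd y)
      in lpp_ge ordm (vec_terms (fst (smul (pp_monom tx) x))) (vec_terms (fst (smul (pp_monom ty) y))))"

definition cp_mult1 :: "('v pp \<Rightarrow> 'v pp \<Rightarrow> bool)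
   \<Rightarrow> ('v, 'k::zero) vec \<times> ('v, 'k) mpoly \<Rightarrow> ('v, 'k) vec \<times> ('v, 'k) mpoly \<Rightarrow> 'v pp" where
  "cp_mult1 ordp x y = pp_lcm (lpp ordp (snd x)) (lpp ordp (snd y)) - lpp ordp (snd x)"

definition spoly ::
  "('v pp \<Rightarrow> 'v pp \<Rightarrow> bool)
   \<Rightarrow> ('v, 'k::field) vec \<times> ('v, 'k) mpoly \<Rightarrow> ('v, 'k) vec \<times> ('v, 'k) mpoly
   \<Rightarrow> ('v, 'k) vec \<times> ('v, 'k) mpoly" where
  "spoly ordp x y =
     (let t = pp_lcm (lpp ordp (snd x)) (lpp ordp (snd y));
          tx = t - lpp ordp (snd x); ty = t - lpp ordp (snd y);
          c = lc ordp (snd x) / lc ordp (snd y)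
      in pair_diff (smul (pp_monom tx) x) (smul (Poly_Mapping.single ty c) y))"

end

theory Submission
  imports Defs Complex_Main
begin

(* Expanding u along the unit vectors writes (u, f) as a sum of monomial
   multiples c x^a (v, g) of elements of G, each "admissible": its vector part
   has leading term at most lpp(u).  Among such representations whose
   polynomial parts have leading terms at most T we induct on T (term orders
   are well-founded by Dickson's lemma) and, for fixed T, on the number of
   summands whose polynomial part reaches T.  If T is dominated by a term of f
   the representation is standard.  Otherwise the coefficients at T cancel, so
   either no summand reaches T and T can be lowered, or two summands reach T.
   Their elements of G form a critical pair whose first multiplier is
   admissible, hence its S-polynomial has a standard representation; rescaled,
   it trades the first summand for a multiple of the second one plus summands
   strictly below T. *)


section \<open>Linear orders and domination of term sets\<close>

definition lin_ord :: "('t \<Rightarrow> 't \<Rightarrow> bool) \<Rightarrow> bool" where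
  "lin_ord ord \<longleftrightarrow> (\<forall>s. ord s s) \<and> (\<forall>s t. ord s t \<and> ord t s \<longrightarrow> s = t) \<and>
     (\<forall>s t u. ord s t \<and> ord t u \<longrightarrow> ord s u) \<and> (\<forall>s t. ord s t \<or> ord t s)"

(* T dominates S if every term of S lies below some term of T; for finite
   sets this is the comparison lpp(T) \<succeq> lpp(S) without mentioning maxima. *)
definition dominates :: "('t \<Rightarrow> 't \<Rightarrow> bool) \<Rightarrow> 't set \<Rightarrow> 't set \<Rightarrow> bool" where
  "dominates ord T S \<longleftrightarrow> (\<forall>s\<in>S. \<exists>t\<in>T. ord s t)"

lemma lin_ord_refl: "lin_ord ord \<Longrightarrow> ord s s"
  unfolding lin_ord_def by blast

lemma lin_ord_antisym: "lin_ord ord \<Longrightarrow> ord s t \<Longrightarrow> ord t s \<Longrightarrow> s = t"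
  unfolding lin_ord_def by blast

lemma lin_ord_trans: "lin_ord ord \<Longrightarrow> ord s t \<Longrightarrow> ord t u \<Longrightarrow> ord s u"
  unfolding lin_ord_def by blast

lemma lin_ord_total: "lin_ord ord \<Longrightarrow> ord s t \<or> ord t s"
  unfolding lin_ord_def by blast

lemma lin_ord_max_exists:
  assumes "lin_ord ord" "finite S" "S \<noteq> {}"
  shows "\<exists>t\<in>S. \<forall>s\<in>S. ord s t"
  using assms(2,3)
proof (induction S rule: finite_ne_induct)
  case (singleton x)
  then show ?case using lin_ord_refl[OF assms(1)] by auto
next
  case (insert x F)
  then obtain t where t: "t \<in> F" "\<forall>s\<in>F. ord s t" by auto
  show ?case
  proof (cases "ord x t")
    case True
    then show ?thesis using t by auto
  next
    case False
    then have "ord t x" using lin_ord_total[OF assms(1)] by blast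
    then show ?thesis using t lin_ord_trans[OF assms(1)] lin_ord_refl[OF assms(1)] by blast
  qed
qed

lemma lt_of_max:
  assumes "lin_ord ord" "finite S" "S \<noteq> {}"
  shows "lt_of ord S \<in> S \<and> (\<forall>s\<in>S. ord s (lt_of ord S))"
proof -
  obtain t where t: "t \<in> S" "\<forall>s\<in>S. ord s t" using lin_ord_max_exists[OF assms] by blast
  have "lt_of ord S = t" unfolding lt_of_def
  proof (rule the_equality)
    show "t \<in> S \<and> (\<forall>s\<in>S. ord s t)" using t by blast
    fix t' assume "t' \<in> S \<and> (\<forall>s\<in>S. ord s t')"
    then show "t' = t" using t lin_ord_antisym[OF assms(1)] by blast
  qed
  then show ?thesis using t by simp
qed

lemma lpp_ge_iff_dominates:
  assumes "lin_ord ord" "finite T" "finite S"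
  shows "lpp_ge ord T S \<longleftrightarrow> dominates ord T S"
proof
  assume ge: "lpp_ge ord T S"
  show "dominates ord T S" unfolding dominates_def
  proof
    fix s assume s: "s \<in> S"
    then have "T \<noteq> {}" and le: "ord (lt_of ord S) (lt_of ord T)"
      using ge by (auto simp: lpp_ge_def)
    moreover have "ord s (lt_of ord S)" using lt_of_max[OF assms(1,3)] s by blast
    ultimately show "\<exists>t\<in>T. ord s t"
      using lt_of_max[OF assms(1,2)] lin_ord_trans[OF assms(1)] by blast
  qed
next
  assume d: "dominates ord T S"
  show "lpp_ge ord T S"
  proof (cases "S = {}")
    case True
    then show ?thesis by (simp add: lpp_ge_def)
  next
    case False
    then have "lt_of ord S \<in> S" using lt_of_max[OF assms(1,3)] by blast
    then obtain t where t: "t \<in> T" "ord (lt_of ord S) t" using d by (auto simp: dominates_def)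
    then have "T \<noteq> {}" by auto
    then have "ord t (lt_of ord T)" using lt_of_max[OF assms(1,2)] t by blast
    then show ?thesis using t lin_ord_trans[OF assms(1)] by (auto simp: lpp_ge_def)
  qed
qed

lemma dominates_trans: "lin_ord ord \<Longrightarrow> dominates ord T S \<Longrightarrow> dominates ord S R \<Longrightarrow> dominates ord T R"
  unfolding dominates_def by (meson lin_ord_trans)

lemma dominates_subset:
  assumes "lin_ord ord" "S \<subseteq> T"
  shows "dominates ord T S"
  unfolding dominates_def using assms(2) lin_ord_refl[OF assms(1)] by blast

lemma dominates_union:
  assumes "lin_ord ord" "dominates ord A B" "S \<subseteq> A \<union> B"
  shows "dominates ord A S"
  using assms(2,3) lin_ord_refl[OF assms(1)] unfolding dominates_def by blast

lemma dominates_total: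
  assumes "lin_ord ord" "finite A" "finite B"
  shows "dominates ord A B \<or> dominates ord B A"
proof (cases "A = {} \<or> B = {}")
  case True
  then show ?thesis by (auto simp: dominates_def)
next
  case False
  then have a: "lt_of ord A \<in> A \<and> (\<forall>s\<in>A. ord s (lt_of ord A))"
    and b: "lt_of ord B \<in> B \<and> (\<forall>s\<in>B. ord s (lt_of ord B))"
    using lt_of_max[OF assms(1)] assms by auto
  have "ord (lt_of ord A) (lt_of ord B) \<or> ord (lt_of ord B) (lt_of ord A)"
    by (rule lin_ord_total[OF assms(1)])
  then show ?thesis using a b lin_ord_trans[OF assms(1)] unfolding dominates_def by blast
qed

lemma dominates_strictly_below:
  assumes "lin_ord ord" "dominates ord A B" "\<forall>a\<in>A. ord a T \<and> a \<noteq> T" "b \<in> B"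
  shows "ord b T \<and> b \<noteq> T"
proof -
  obtain a where a: "a \<in> A" "ord b a" using assms(2,4) unfolding dominates_def by blast
  then have "ord b T" using assms(3) lin_ord_trans[OF assms(1)] by blast
  moreover have "b \<noteq> T"
    using a assms(3) lin_ord_antisym[OF assms(1)] by blast
  ultimately show ?thesis ..
qed


section \<open>Leading terms of products\<close>

definition add_compatible :: "('a::plus \<Rightarrow> 'a \<Rightarrow> bool) \<Rightarrow> bool" where
  "add_compatible ord \<longleftrightarrow> (\<forall>s t u. ord s t \<longrightarrow> ord (s + u) (t + u))"

lemma lookup_single_mult:
  fixes q :: "'a::cancel_comm_monoid_add \<Rightarrow>\<^sub>0 'k::comm_ring_1"
  shows "Poly_Mapping.lookup (Poly_Mapping.single a c * q) (a + b) = c * Poly_Mapping.lookup q b"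
proof -
  define q' where "q' = q - Poly_Mapping.single b (Poly_Mapping.lookup q b)"
  have "b \<notin> Poly_Mapping.keys q'" by (simp add: q'_def in_keys_iff lookup_minus)
  then have "a + b \<notin> Poly_Mapping.keys (Poly_Mapping.single a c * q')"
    using keys_mult[of "Poly_Mapping.single a c" q'] by (auto split: if_splits)
  moreover have "Poly_Mapping.single a c * q
      = Poly_Mapping.single (a + b) (c * Poly_Mapping.lookup q b) + Poly_Mapping.single a c * q'"
    by (simp add: q'_def right_diff_distrib mult_single)
  ultimately show ?thesis by (simp add: lookup_add in_keys_iff)
qed

lemma keys_single_mult_subset:
  fixes q :: "'a::cancel_comm_monoid_add \<Rightarrow>\<^sub>0 'k::comm_ring_1"
  shows "Poly_Mapping.keys (Poly_Mapping.single a c * q) \<subseteq> (\<lambda>b. a + b) ` Poly_Mapping.keys q"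
  using keys_mult[of "Poly_Mapping.single a c" q] by (auto split: if_splits)

lemma keys_single_mult:
  fixes q :: "'a::cancel_comm_monoid_add \<Rightarrow>\<^sub>0 'k::field"
  assumes "c \<noteq> 0"
  shows "Poly_Mapping.keys (Poly_Mapping.single a c * q) = (\<lambda>b. a + b) ` Poly_Mapping.keys q"
  using keys_single_mult_subset[of a c q] assms by (auto simp: in_keys_iff lookup_single_mult)

(* The sum of the leading terms of two nonzero factors occurs in the product:
   every other pair of terms sums to something else. *)
lemma lead_terms_mult:
  fixes p w :: "'a::cancel_comm_monoid_add \<Rightarrow>\<^sub>0 'k::field"
  assumes lin: "lin_ord ord" and cp: "add_compatible ord" and p: "p \<noteq> 0" and w: "w \<noteq> 0"
  defines "Mp \<equiv> lt_of ord (Poly_Mapping.keys p)" and "Mw \<equiv> lt_of ord (Poly_Mapping.keys w)"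
  shows "Mp + Mw \<in> Poly_Mapping.keys (p * w)"
proof -
  have Pp: "Mp \<in> Poly_Mapping.keys p \<and> (\<forall>s\<in>Poly_Mapping.keys p. ord s Mp)"
    unfolding Mp_def using lt_of_max[OF lin] p by auto
  have Pw: "Mw \<in> Poly_Mapping.keys w \<and> (\<forall>s\<in>Poly_Mapping.keys w. ord s Mw)"
    unfolding Mw_def using lt_of_max[OF lin] w by auto
  have only_lead: "x = Mp" if "ord x Mp" "ord y Mw" "x + y = Mp + Mw" for x y
  proof -
    have up: "ord (x + y) (Mp + y)" using cp that(1) unfolding add_compatible_def by blast
    have "ord (Mp + y) (Mp + Mw)"
      using cp that(2) unfolding add_compatible_def by (metis add.commute)
    then have down: "ord (Mp + y) (x + y)" using that(3) by simp
    show "x = Mp" using lin_ord_antisym[OF lin up down] by simp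
  qed
  define cp where "cp = Poly_Mapping.lookup p Mp"
  define cw where "cw = Poly_Mapping.lookup w Mw"
  define p' where "p' = p - Poly_Mapping.single Mp cp"
  define w' where "w' = w - Poly_Mapping.single Mw cw"
  have kp': "Poly_Mapping.keys p' \<subseteq> Poly_Mapping.keys p - {Mp}"
    by (auto simp: p'_def cp_def in_keys_iff lookup_minus lookup_single)
  have kw': "Poly_Mapping.keys w' \<subseteq> Poly_Mapping.keys w - {Mw}"
    by (auto simp: w'_def cw_def in_keys_iff lookup_minus lookup_single)
  have "p * w = Poly_Mapping.single (Mp + Mw) (cp * cw)
      + Poly_Mapping.single Mp cp * w' + p' * w"
    by (simp add: p'_def w'_def algebra_simps mult_single)
  moreover have "Mp + Mw \<notin> Poly_Mapping.keys (Poly_Mapping.single Mp cp * w')"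
  proof
    assume "Mp + Mw \<in> Poly_Mapping.keys (Poly_Mapping.single Mp cp * w')"
    then obtain y where "y \<in> Poly_Mapping.keys w'" "Mp + Mw = Mp + y"
      using keys_single_mult_subset by blast
    then show False using kw' by auto
  qed
  moreover have "Mp + Mw \<notin> Poly_Mapping.keys (p' * w)"
  proof
    assume "Mp + Mw \<in> Poly_Mapping.keys (p' * w)"
    then obtain x y where xy: "x \<in> Poly_Mapping.keys p'" "y \<in> Poly_Mapping.keys w" "Mp + Mw = x + y"
      using keys_mult by blast
    then have "x = Mp" using only_lead[of x y] Pp Pw kp' by auto
    then show False using xy kp' by auto
  qed
  ultimately have "Poly_Mapping.lookup (p * w) (Mp + Mw) = cp * cw"
    by (simp add: lookup_add in_keys_iff)
  then show ?thesis using Pp Pw by (simp add: cp_def cw_def in_keys_iff)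
qed

lemma keys_mult_dominates:
  fixes p w :: "'a::cancel_comm_monoid_add \<Rightarrow>\<^sub>0 'k::field"
  assumes lin: "lin_ord ord" and cp: "add_compatible ord"
    and a: "a \<in> Poly_Mapping.keys p" and b: "b \<in> Poly_Mapping.keys w"
  shows "\<exists>g\<in>Poly_Mapping.keys (p * w). ord (a + b) g"
proof -
  have p: "p \<noteq> 0" and w: "w \<noteq> 0" using a b by auto
  define Mp where "Mp = lt_of ord (Poly_Mapping.keys p)"
  define Mw where "Mw = lt_of ord (Poly_Mapping.keys w)"
  have "ord a Mp" unfolding Mp_def using lt_of_max[OF lin] a p by auto
  then have "ord (a + b) (Mp + b)" using cp unfolding add_compatible_def by blast
  moreover have "ord b Mw" unfolding Mw_def using lt_of_max[OF lin] b w by auto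
  then have "ord (Mp + b) (Mp + Mw)" using cp unfolding add_compatible_def by (metis add.commute)
  ultimately have "ord (a + b) (Mp + Mw)" using lin_ord_trans[OF lin] by blast
  then show ?thesis using lead_terms_mult[OF lin cp p w] unfolding Mp_def Mw_def by blast
qed


section \<open>Term orders\<close>

lemma pp_term_order_lin: "pp_term_order ord \<Longrightarrow> lin_ord ord"
  unfolding pp_term_order_def lin_ord_def by blast

lemma pp_term_order_compatible: "pp_term_order ord \<Longrightarrow> add_compatible ord"
  unfolding pp_term_order_def add_compatible_def by blast

lemma pp_term_order_zero: "pp_term_order ord \<Longrightarrow> ord 0 t"
  unfolding pp_term_order_def by blast

lemma mod_term_order_lin: "mod_term_order ord \<Longrightarrow> lin_ord ord"
  unfolding mod_term_order_def lin_ord_def by blast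

lemma mod_term_order_component_lin: "mod_term_order ord \<Longrightarrow> lin_ord (\<lambda>a b. ord (a, i) (b, i))"
  unfolding mod_term_order_def lin_ord_def by blast

lemma mod_term_order_component_compatible:
  "mod_term_order ord \<Longrightarrow> add_compatible (\<lambda>a b. ord (a, i) (b, i))"
  unfolding mod_term_order_def add_compatible_def by blast

lemma mod_term_order_shift: "mod_term_order ord \<Longrightarrow> ord (a, i) (b, j) \<Longrightarrow> ord (a + c, i) (b + c, j)"
  unfolding mod_term_order_def by blast

lemma mod_term_order_up: "mod_term_order ord \<Longrightarrow> ord (a, i) (a + c, i)"
  unfolding mod_term_order_def by blast

lemma nat_seq_nondecreasing_subseq:
  fixes s :: "nat \<Rightarrow> nat"
  shows "\<exists>g::nat\<Rightarrow>nat. strict_mono g \<and> (\<forall>i j. i \<le> j \<longrightarrow> s (g i) \<le> s (g j))"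
proof -
  obtain f where f: "strict_mono f" "monoseq (\<lambda>n. s (f n))" using seq_monosub[of s] by blast
  show ?thesis
  proof (cases "\<forall>m n. m \<le> n \<longrightarrow> s (f m) \<le> s (f n)")
    case True
    then show ?thesis using f by blast
  next
    case False
    then have dec: "\<forall>m n. m \<le> n \<longrightarrow> s (f n) \<le> s (f m)" using f(2) unfolding monoseq_def by blast
    (* a non-increasing sequence of naturals is eventually constant at its minimum *)
    define M where "M = (LEAST x. x \<in> range (\<lambda>n. s (f n)))"
    have "M \<in> range (\<lambda>n. s (f n))" unfolding M_def by (rule LeastI[of _ "s (f 0)"]) (rule rangeI)
    then obtain N where N: "s (f N) = M" by auto
    have low: "s (f N) \<le> s (f n)" for n unfolding N M_def by (rule Least_le) (rule rangeI)
    define g where "g = (\<lambda>n. f (n + N))"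
    have "strict_mono g" using f(1) unfolding g_def strict_mono_def by simp
    moreover have "s (g i) \<le> s (g j)" if "i \<le> j" for i j
    proof -
      have "s (f (i + N)) \<le> s (f N)" using dec[rule_format, of N "i + N"] by simp
      also have "\<dots> \<le> s (f (j + N))" by (rule low)
      finally show ?thesis unfolding g_def .
    qed
    ultimately show ?thesis by blast
  qed
qed

lemma dickson_subseq:
  fixes t :: "nat \<Rightarrow> ('v \<Rightarrow>\<^sub>0 nat)"
  assumes "finite V"
  shows "\<exists>h::nat\<Rightarrow>nat. strict_mono h \<and>
    (\<forall>i j. i \<le> j \<longrightarrow> (\<forall>v\<in>V. Poly_Mapping.lookup (t (h i)) v \<le> Poly_Mapping.lookup (t (h j)) v))"
  using assms
proof (induction V rule: finite_induct)
  case empty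
  show ?case by (rule exI[of _ "id::nat\<Rightarrow>nat"]) (simp add: strict_mono_def)
next
  case (insert x V)
  then obtain h :: "nat \<Rightarrow> nat" where h: "strict_mono h"
      "\<forall>i j. i \<le> j \<longrightarrow> (\<forall>v\<in>V. Poly_Mapping.lookup (t (h i)) v \<le> Poly_Mapping.lookup (t (h j)) v)"
    by blast
  obtain g :: "nat \<Rightarrow> nat" where g: "strict_mono g"
      "\<forall>i j. i \<le> j \<longrightarrow> Poly_Mapping.lookup (t (h (g i))) x \<le> Poly_Mapping.lookup (t (h (g j))) x"
    using nat_seq_nondecreasing_subseq[of "\<lambda>n. Poly_Mapping.lookup (t (h n)) x"] by blast
  have "strict_mono (h \<circ> g)" using h(1) g(1) unfolding strict_mono_def by simp
  moreover have "\<forall>v\<in>insert x V. Poly_Mapping.lookup (t ((h \<circ> g) i)) v \<le> Poly_Mapping.lookup (t ((h \<circ> g) j)) v"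
    if "i \<le> j" for i j
  proof -
    have "g i \<le> g j" using g(1) that by (simp add: strict_mono_less_eq)
    then show ?thesis using h(2) g(2) that by auto
  qed
  ultimately show ?case by blast
qed

lemma dickson:
  fixes t :: "nat \<Rightarrow> ('v::finite \<Rightarrow>\<^sub>0 nat)"
  shows "\<exists>i j. i < j \<and> (\<forall>v. Poly_Mapping.lookup (t i) v \<le> Poly_Mapping.lookup (t j) v)"
proof -
  obtain h :: "nat \<Rightarrow> nat" where h: "strict_mono h"
      "\<forall>i j. i \<le> j \<longrightarrow> (\<forall>v\<in>UNIV. Poly_Mapping.lookup (t (h i)) v \<le> Poly_Mapping.lookup (t (h j)) v)"
    using dickson_subseq[of "UNIV::'v set" t] by auto
  have "h 0 < h 1" using h(1) by (simp add: strict_mono_def)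
  then show ?thesis using h(2)[rule_format, of 0 1] by auto
qed

lemma pp_term_order_dvd:
  fixes s t :: "'v \<Rightarrow>\<^sub>0 nat"
  assumes "pp_term_order ord" "\<forall>v. Poly_Mapping.lookup s v \<le> Poly_Mapping.lookup t v"
  shows "ord s t"
proof -
  have t: "t = (t - s) + s"
    by (rule poly_mapping_eqI) (use assms(2) in \<open>simp add: lookup_add lookup_minus\<close>)
  have "ord (0 + s) ((t - s) + s)"
    using pp_term_order_zero[OF assms(1)] pp_term_order_compatible[OF assms(1)]
    unfolding add_compatible_def by blast
  then show ?thesis using t by simp
qed

(* Term orders on finitely many variables are well-founded: an infinite
   strictly descending chain would contain a divisible pair by Dickson's lemma. *)
lemma wf_pp_term_order:
  fixes ord :: "('v::finite \<Rightarrow>\<^sub>0 nat) \<Rightarrow> _"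
  assumes "pp_term_order ord"
  shows "wf {(s, t). ord s t \<and> s \<noteq> t}"
proof (rule ccontr)
  have lin: "lin_ord ord" by (rule pp_term_order_lin[OF assms])
  assume "\<not> wf {(s, t). ord s t \<and> s \<noteq> t}"
  then obtain f where f: "\<forall>i. ord (f (Suc i)) (f i) \<and> f (Suc i) \<noteq> f i"
    unfolding wf_iff_no_infinite_down_chain by auto
  have chain: "ord (f (i + Suc k)) (f i) \<and> f (i + Suc k) \<noteq> f i" for i k
  proof (induction k)
    case 0
    then show ?case using f by simp
  next
    case (Suc k)
    have step: "ord (f (i + Suc (Suc k))) (f (i + Suc k))" "f (i + Suc (Suc k)) \<noteq> f (i + Suc k)"
      using f[rule_format, of "i + Suc k"] by simp_all
    have "ord (f (i + Suc (Suc k))) (f i)" using step(1) Suc lin_ord_trans[OF lin] by blast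
    moreover have "f (i + Suc (Suc k)) \<noteq> f i"
    proof
      assume "f (i + Suc (Suc k)) = f i"
      then have "f (i + Suc k) = f i" using step(1) Suc lin_ord_antisym[OF lin] by metis
      then show False using Suc by simp
    qed
    ultimately show ?case by simp
  qed
  obtain i j where ij: "i < j" "\<forall>v. Poly_Mapping.lookup (f i) v \<le> Poly_Mapping.lookup (f j) v"
    using dickson[of f] by blast
  have "ord (f i) (f j)" by (rule pp_term_order_dvd[OF assms ij(2)])
  moreover obtain k where "j = i + Suc k" using ij(1) less_iff_Suc_add by auto
  ultimately show False using chain[of i k] lin_ord_antisym[OF lin] by metis
qed


section \<open>Formal combinations of module elements\<close>

lemma fst_smul [simp]: "fst (smul p x) = (\<lambda>i. p * fst x i)"
  by (simp add: smul_def)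

lemma snd_smul [simp]: "snd (smul p x) = p * snd x"
  by (simp add: smul_def)

lemma fst_pair_add [simp]: "fst (pair_add x y) = (\<lambda>i. fst x i + fst y i)"
  by (simp add: pair_add_def)

lemma snd_pair_add [simp]: "snd (pair_add x y) = snd x + snd y"
  by (simp add: pair_add_def)

lemma fst_pair_diff [simp]: "fst (pair_diff x y) = (\<lambda>i. fst x i - fst y i)"
  by (simp add: pair_diff_def)

lemma snd_pair_diff [simp]: "snd (pair_diff x y) = snd x - snd y"
  by (simp add: pair_diff_def)

lemma pair_eqI: "(\<And>i. fst x i = fst y i) \<Longrightarrow> snd x = snd y \<Longrightarrow> x = y"
  by (simp add: prod_eq_iff fun_eq_iff)

definition lin_comb :: "(('v, 'k::comm_ring_1) mpoly \<times> (('v, 'k) vec \<times> ('v, 'k) mpoly)) list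
    \<Rightarrow> ('v, 'k) vec \<times> ('v, 'k) mpoly" where
  "lin_comb ps = foldr (\<lambda>(p, b) acc. pair_add (smul p b) acc) ps ((\<lambda>_. 0), 0)"

lemma fst_lin_comb: "fst (lin_comb xs) i = sum_list (map (\<lambda>(p, b). p * fst b i) xs)"
  by (induction xs) (auto simp: lin_comb_def)

lemma snd_lin_comb: "snd (lin_comb xs) = sum_list (map (\<lambda>(p, b). p * snd b) xs)"
  by (induction xs) (auto simp: lin_comb_def)

lemma lin_comb_Cons: "lin_comb ((p, b) # xs) = pair_add (smul p b) (lin_comb xs)"
  by (simp add: lin_comb_def)

lemma lin_comb_single: "lin_comb [(p, b)] = smul p b"
  by (rule pair_eqI) (simp_all add: lin_comb_def)

lemma lin_comb_append: "lin_comb (xs @ ys) = pair_add (lin_comb xs) (lin_comb ys)"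
  by (rule pair_eqI) (simp_all add: fst_lin_comb snd_lin_comb)

lemma lin_comb_filter:
  "lin_comb xs = pair_add (lin_comb (filter P xs)) (lin_comb (filter (\<lambda>x. \<not> P x) xs))"
proof -
  have split: "sum_list (map h xs) = sum_list (map h (filter P xs)) + sum_list (map h (filter (\<lambda>x. \<not> P x) xs))"
    for h :: "_ \<Rightarrow> ('a, 'b) mpoly"
    by (induction xs) (simp_all add: algebra_simps)
  show ?thesis by (rule pair_eqI) (simp_all add: fst_lin_comb snd_lin_comb split)
qed

lemma lin_comb_same_element: "lin_comb (map (\<lambda>a. (h a, w)) xs) = smul (sum_list (map h xs)) w"
  by (rule pair_eqI) (simp_all add: fst_lin_comb snd_lin_comb o_def sum_list_mult_const)

lemma fst_lin_comb_concat: "fst (lin_comb (concat xss)) i = sum_list (map (\<lambda>xs. fst (lin_comb xs) i) xss)"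
  by (induction xss) (simp_all add: lin_comb_append, simp add: lin_comb_def)

lemma snd_lin_comb_concat: "snd (lin_comb (concat xss)) = sum_list (map (\<lambda>xs. snd (lin_comb xs)) xss)"
  by (induction xss) (simp_all add: lin_comb_append, simp add: lin_comb_def)

lemma lin_comb_merge:
  assumes S: "lin_comb S = pair_diff (smul (Poly_Mapping.single a1 c1) b1) (smul (Poly_Mapping.single a2 d) b2)"
  shows "lin_comb ((Poly_Mapping.single a1 c1, b1) # (Poly_Mapping.single a2 c2, b2) # L)
    = lin_comb (L @ [(Poly_Mapping.single a2 (c2 + d), b2)] @ S)"
proof -
  have "fst (lin_comb S) = (\<lambda>i. Poly_Mapping.single a1 c1 * fst b1 i - Poly_Mapping.single a2 d * fst b2 i)"
    and "snd (lin_comb S) = Poly_Mapping.single a1 c1 * snd b1 - Poly_Mapping.single a2 d * snd b2"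
    using S by simp_all
  then show ?thesis
    unfolding lin_comb_append lin_comb_Cons[symmetric] append.simps
    by (intro pair_eqI) (simp_all add: lin_comb_Cons single_add algebra_simps)
qed

lemma lookup_snd_lin_comb_zero:
  "(\<forall>(p, b)\<in>set xs. T \<notin> Poly_Mapping.keys (p * snd b)) \<Longrightarrow> Poly_Mapping.lookup (snd (lin_comb xs)) T = 0"
  by (induction xs) (auto simp: lin_comb_def lookup_add in_keys_iff)

definition keys_list :: "('a \<Rightarrow>\<^sub>0 'b::zero) \<Rightarrow> 'a list" where
  "keys_list q = (SOME xs. distinct xs \<and> set xs = Poly_Mapping.keys q)"

lemma keys_list: "distinct (keys_list q) \<and> set (keys_list q) = Poly_Mapping.keys q"
  unfolding keys_list_def by (rule someI_ex) (metis finite_distinct_list finite_keys)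

lemma single_mult_monomial_sum:
  fixes q :: "'a::cancel_comm_monoid_add \<Rightarrow>\<^sub>0 'k::comm_ring_1"
  shows "Poly_Mapping.single s k * q
    = sum_list (map (\<lambda>a. Poly_Mapping.single (s + a) (k * Poly_Mapping.lookup q a)) (keys_list q))"
proof -
  have q: "q = (\<Sum>a\<in>Poly_Mapping.keys q. Poly_Mapping.single a (Poly_Mapping.lookup q a))"
    by (rule poly_mapping_eqI) (simp add: lookup_sum lookup_single when_def in_keys_iff)
  have "sum_list (map (\<lambda>a. Poly_Mapping.single (s + a) (k * Poly_Mapping.lookup q a)) (keys_list q))
      = (\<Sum>a\<in>Poly_Mapping.keys q. Poly_Mapping.single s k * Poly_Mapping.single a (Poly_Mapping.lookup q a))"
    using keys_list[of q] by (simp add: sum_list_distinct_conv_sum_set mult_single)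
  also have "\<dots> = Poly_Mapping.single s k * q"
    by (subst (2) q) (simp add: sum_distrib_left)
  finally show ?thesis by simp
qed

(* Multiply a combination by the monomial k x^s and split every coefficient
   into monomials: the result has only monomial coefficients. *)
definition split_monomials where
  "split_monomials s k qs = concat (map (\<lambda>(q, w).
     map (\<lambda>a. (Poly_Mapping.single (s + a) (k * Poly_Mapping.lookup q a), w)) (keys_list q)) qs)"

lemma lin_comb_split_monomials:
  "lin_comb (split_monomials s k qs) = smul (Poly_Mapping.single s k) (lin_comb qs)"
proof (induction qs)
  case Nil
  then show ?case by (simp add: split_monomials_def lin_comb_def smul_def)
next
  case (Cons e qs)
  obtain q w where e: "e = (q, w)" by (cases e)
  have "lin_comb (split_monomials s k (e # qs))
      = pair_add (smul (Poly_Mapping.single s k * q) w) (smul (Poly_Mapping.single s k) (lin_comb qs))"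
    by (simp add: split_monomials_def e lin_comb_append lin_comb_same_element
        single_mult_monomial_sum[symmetric] Cons[unfolded split_monomials_def])
  also have "\<dots> = smul (Poly_Mapping.single s k) (lin_comb (e # qs))"
    by (rule pair_eqI) (simp_all add: e fst_lin_comb snd_lin_comb algebra_simps)
  finally show ?case .
qed

lemma split_monomials_mem:
  assumes "e \<in> set (split_monomials s k qs)"
  shows "\<exists>q w a. (q, w) \<in> set qs \<and> a \<in> Poly_Mapping.keys q \<and>
    e = (Poly_Mapping.single (s + a) (k * Poly_Mapping.lookup q a), w)"
  using assms keys_list unfolding split_monomials_def by fastforce


section \<open>Term sets of multiples\<close>

definition shift_terms :: "'v pp \<Rightarrow> ('v pp \<times> nat) set \<Rightarrow> ('v pp \<times> nat) set" where
  "shift_terms a V = {(a + b, i) | b i. (b, i) \<in> V}"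

lemma shift_terms_add: "shift_terms a (shift_terms b V) = shift_terms (a + b) V"
  unfolding shift_terms_def by (auto simp: add.assoc)

lemma vec_terms_single_mult_subset:
  "vec_terms (fst (smul (Poly_Mapping.single a c) b)) \<subseteq> shift_terms a (vec_terms (fst b))"
  using keys_single_mult_subset unfolding vec_terms_def shift_terms_def by fastforce

lemma vec_terms_single_mult:
  fixes b :: "('v, 'k::field) vec \<times> ('v, 'k) mpoly"
  assumes "c \<noteq> 0"
  shows "vec_terms (fst (smul (Poly_Mapping.single a c) b)) = shift_terms a (vec_terms (fst b))"
  using keys_single_mult[OF assms] unfolding vec_terms_def shift_terms_def by fastforce

lemma poly_terms_single_mult_subset:
  "poly_terms (snd (smul (Poly_Mapping.single a c) b)) \<subseteq> (\<lambda>\<beta>. a + \<beta>) ` poly_terms (snd b)"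
  using keys_single_mult_subset unfolding poly_terms_def by fastforce

lemma poly_terms_single_mult:
  fixes b :: "('v, 'k::field) vec \<times> ('v, 'k) mpoly"
  assumes "c \<noteq> 0"
  shows "poly_terms (snd (smul (Poly_Mapping.single a c) b)) = (\<lambda>\<beta>. a + \<beta>) ` poly_terms (snd b)"
  using keys_single_mult[OF assms] unfolding poly_terms_def by simp

lemma finite_vec_terms:
  assumes "\<forall>i\<ge>m. v i = 0"
  shows "finite (vec_terms v)"
proof -
  have "vec_terms v \<subseteq> (\<Union>i<m. Poly_Mapping.keys (v i) \<times> {i})"
    using assms unfolding vec_terms_def by (auto simp: not_less[symmetric])
  then show ?thesis by (rule finite_subset) auto
qed

lemma finite_poly_terms [simp]: "finite (poly_terms p)"
  by (simp add: poly_terms_def)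

lemma dominates_shift_terms:
  assumes mo: "mod_term_order ordm" and d: "dominates ordm A B"
  shows "dominates ordm (shift_terms s A) (shift_terms s B)"
  unfolding dominates_def
proof
  fix z assume "z \<in> shift_terms s B"
  then obtain b i where z: "z = (s + b, i)" and b: "(b, i) \<in> B" unfolding shift_terms_def by blast
  then obtain a j where a: "(a, j) \<in> A" "ordm (b, i) (a, j)" using d unfolding dominates_def by auto
  have "ordm (b + s, i) (a + s, j)" by (rule mod_term_order_shift[OF mo a(2)])
  then have "ordm z (s + a, j)" unfolding z by (metis add.commute)
  moreover have "(s + a, j) \<in> shift_terms s A" using a(1) unfolding shift_terms_def by blast
  ultimately show "\<exists>t\<in>shift_terms s A. ordm z t" by blast
qed

lemma dominates_image_add:
  fixes A B :: "'a::ab_semigroup_add set"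
  assumes cp: "add_compatible ord" and d: "dominates ord A B"
  shows "dominates ord ((+) s ` A) ((+) s ` B)"
  unfolding dominates_def
proof
  fix x assume "x \<in> (+) s ` B"
  then obtain b where b: "b \<in> B" "x = s + b" by blast
  then obtain a where a: "a \<in> A" "ord b a" using d unfolding dominates_def by blast
  then have "ord (b + s) (a + s)" using cp unfolding add_compatible_def by blast
  then have "ord x (s + a)" using b(2) by (metis add.commute)
  then show "\<exists>t\<in>(+) s ` A. ord x t" using a(1) by blast
qed

lemma dominates_shift_terms_self:
  assumes mo: "mod_term_order ordm"
  shows "dominates ordm (shift_terms s V) V"
  unfolding dominates_def
proof clarify
  fix b i assume "(b, i) \<in> V"
  then have "(s + b, i) \<in> shift_terms s V" unfolding shift_terms_def by blast
  moreover have "ordm (b, i) (s + b, i)" using mod_term_order_up[OF mo, of b i s] by (simp add: add.commute)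
  ultimately show "\<exists>t\<in>shift_terms s V. ordm (b, i) t" by blast
qed

lemma vec_terms_mult_dominates:
  fixes q :: "('v, 'k::field) mpoly"
  assumes mo: "mod_term_order ordm" and a: "a \<in> Poly_Mapping.keys q"
  shows "dominates ordm (vec_terms (fst (smul q w))) (shift_terms a (vec_terms (fst w)))"
  unfolding dominates_def
proof
  fix z assume "z \<in> shift_terms a (vec_terms (fst w))"
  then obtain b i where z: "z = (a + b, i)" and b: "b \<in> Poly_Mapping.keys (fst w i)"
    by (auto simp: shift_terms_def vec_terms_def)
  obtain g where "g \<in> Poly_Mapping.keys (q * fst w i)" "ordm (a + b, i) (g, i)"
    using keys_mult_dominates[OF mod_term_order_component_lin[OF mo]
        mod_term_order_component_compatible[OF mo] a b] by blast
  then show "\<exists>t\<in>vec_terms (fst (smul q w)). ordm z t" unfolding z vec_terms_def by auto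
qed

lemma poly_terms_mult_dominates:
  fixes q g :: "('v, 'k::field) mpoly"
  assumes po: "pp_term_order ordp" and a: "a \<in> Poly_Mapping.keys q"
  shows "dominates ordp (poly_terms (q * g)) ((+) a ` poly_terms g)"
  unfolding dominates_def poly_terms_def
  using keys_mult_dominates[OF pp_term_order_lin[OF po] pp_term_order_compatible[OF po] a] by blast


section \<open>Leading terms, lcm and S-polynomials\<close>

lemma lpp_max:
  assumes "pp_term_order ordp" "g \<noteq> 0"
  shows "lpp ordp g \<in> Poly_Mapping.keys g \<and> (\<forall>\<beta>\<in>Poly_Mapping.keys g. ordp \<beta> (lpp ordp g))"
  unfolding lpp_def using lt_of_max[OF pp_term_order_lin[OF assms(1)]] assms(2) by auto

lemma lc_nonzero:
  assumes "pp_term_order ordp" "g \<noteq> 0"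
  shows "lc ordp g \<noteq> 0"
  using lpp_max[OF assms] unfolding lc_def by (simp add: in_keys_iff)

lemma pp_lcm_comm: "pp_lcm (L1::'v \<Rightarrow>\<^sub>0 nat) L2 = pp_lcm L2 L1"
  by (rule poly_mapping_eqI) (simp add: lookup_add lookup_minus pp_lcm_def)

lemma pp_lcm_minus_add:
  fixes L1 L2 :: "'v \<Rightarrow>\<^sub>0 nat"
  shows "(pp_lcm L1 L2 - L1) + L1 = pp_lcm L1 L2" and "(pp_lcm L1 L2 - L2) + L2 = pp_lcm L1 L2"
  by (rule poly_mapping_eqI, simp add: lookup_add lookup_minus pp_lcm_def)+

lemma pp_lcm_factor:
  fixes a1 L1 a2 L2 :: "'v \<Rightarrow>\<^sub>0 nat"
  assumes "a1 + L1 = a2 + L2"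
  defines "s \<equiv> a1 + L1 - pp_lcm L1 L2"
  shows "s + (pp_lcm L1 L2 - L1) = a1" and "s + (pp_lcm L1 L2 - L2) = a2"
    and "s + pp_lcm L1 L2 = a1 + L1"
proof -
  have e: "Poly_Mapping.lookup a1 v + Poly_Mapping.lookup L1 v
      = Poly_Mapping.lookup a2 v + Poly_Mapping.lookup L2 v" for v
    using arg_cong[OF assms(1), of "\<lambda>x. Poly_Mapping.lookup x v"] by (simp add: lookup_add)
  have "Poly_Mapping.lookup (s + (pp_lcm L1 L2 - L1)) v = Poly_Mapping.lookup a1 v"
    and "Poly_Mapping.lookup (s + (pp_lcm L1 L2 - L2)) v = Poly_Mapping.lookup a2 v"
    and "Poly_Mapping.lookup (s + pp_lcm L1 L2) v = Poly_Mapping.lookup (a1 + L1) v" for v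
    using e[of v] by (simp_all add: s_def lookup_add lookup_minus pp_lcm_def)
  then show "s + (pp_lcm L1 L2 - L1) = a1" "s + (pp_lcm L1 L2 - L2) = a2" "s + pp_lcm L1 L2 = a1 + L1"
    by (auto intro: poly_mapping_eqI)
qed

lemma spoly_eq:
  "spoly ordp x y = pair_diff
     (smul (Poly_Mapping.single (pp_lcm (lpp ordp (snd x)) (lpp ordp (snd y)) - lpp ordp (snd x)) 1) x)
     (smul (Poly_Mapping.single (pp_lcm (lpp ordp (snd x)) (lpp ordp (snd y)) - lpp ordp (snd y))
        (lc ordp (snd x) / lc ordp (snd y))) y)"
  by (simp add: spoly_def Let_def pp_monom_def)

(* The polynomial part of an S-polynomial lies strictly below the lcm of the
   leading terms: the two multiples have the same leading monomial. *)
lemma spoly_below_lcm: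
  fixes x y :: "('v, 'k::field) vec \<times> ('v, 'k) mpoly"
  assumes po: "pp_term_order ordp" and gx: "snd x \<noteq> 0" and gy: "snd y \<noteq> 0"
    and z: "\<zeta> \<in> poly_terms (snd (spoly ordp x y))"
  shows "ordp \<zeta> (pp_lcm (lpp ordp (snd x)) (lpp ordp (snd y))) \<and> \<zeta> \<noteq> pp_lcm (lpp ordp (snd x)) (lpp ordp (snd y))"
proof -
  define Lx where "Lx = lpp ordp (snd x)"
  define Ly where "Ly = lpp ordp (snd y)"
  define t where "t = pp_lcm Lx Ly"
  define c where "c = lc ordp (snd x) / lc ordp (snd y)"
  define mx where "mx = Poly_Mapping.single (t - Lx) 1 * snd x"
  define my where "my = Poly_Mapping.single (t - Ly) c * snd y"
  have sp: "snd (spoly ordp x y) = mx - my"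
    by (simp add: spoly_eq mx_def my_def t_def Lx_def Ly_def c_def)
  have cp: "add_compatible ordp" by (rule pp_term_order_compatible[OF po])
  have below: "ordp \<zeta> t"
    if key: "\<zeta> \<in> Poly_Mapping.keys (Poly_Mapping.single t' d * g)"
      and g: "g \<noteq> 0" and t: "t' + lpp ordp g = t"
    for t' d and g :: "('v, 'k) mpoly"
  proof -
    obtain \<beta> where "\<beta> \<in> Poly_Mapping.keys g" "\<zeta> = t' + \<beta>"
      using key keys_single_mult_subset by blast
    then have "ordp (\<beta> + t') (lpp ordp g + t')" "\<zeta> = t' + \<beta>"
      using lpp_max[OF po g] cp unfolding add_compatible_def by blast+
    then show ?thesis using t by (simp add: add.commute)
  qed
  have "\<zeta> \<in> Poly_Mapping.keys mx \<union> Poly_Mapping.keys my"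
    using keys_diff[of mx my] z unfolding sp poly_terms_def by blast
  then have le: "ordp \<zeta> t"
    using below[OF _ gx, of "t - Lx" 1] below[OF _ gy, of "t - Ly" c] pp_lcm_minus_add
    unfolding mx_def my_def t_def Lx_def Ly_def by blast
  have "Poly_Mapping.lookup mx t = lc ordp (snd x)"
    using lookup_single_mult[of "t - Lx" 1 "snd x" Lx]
    by (simp add: mx_def lc_def Lx_def t_def pp_lcm_minus_add)
  moreover have "Poly_Mapping.lookup my t = c * lc ordp (snd y)"
    using lookup_single_mult[of "t - Ly" c "snd y" Ly]
    by (simp add: my_def lc_def Ly_def t_def pp_lcm_minus_add)
  ultimately have "Poly_Mapping.lookup (snd (spoly ordp x y)) t = 0"
    using lc_nonzero[OF po gy] by (simp add: sp lookup_minus c_def)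
  then have "\<zeta> \<noteq> t" using z by (auto simp: poly_terms_def in_keys_iff)
  then show ?thesis using le unfolding t_def Lx_def Ly_def by simp
qed

lemma spoly_vec_terms:
  fixes x y :: "('v, 'k::field) vec \<times> ('v, 'k) mpoly"
  assumes po: "pp_term_order ordp" and gx: "snd x \<noteq> 0" and gy: "snd y \<noteq> 0"
  shows "vec_terms (fst (spoly ordp x y)) \<subseteq>
    vec_terms (fst (smul (pp_monom (pp_lcm (lpp ordp (snd x)) (lpp ordp (snd y)) - lpp ordp (snd x))) x))
    \<union> vec_terms (fst (smul (pp_monom (pp_lcm (lpp ordp (snd x)) (lpp ordp (snd y)) - lpp ordp (snd y))) y))"
proof -
  define c where "c = lc ordp (snd x) / lc ordp (snd y)"
  have c: "c \<noteq> 0" unfolding c_def using lc_nonzero[OF po gx] lc_nonzero[OF po gy] by simp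
  define tx where "tx = pp_lcm (lpp ordp (snd x)) (lpp ordp (snd y)) - lpp ordp (snd x)"
  define ty where "ty = pp_lcm (lpp ordp (snd x)) (lpp ordp (snd y)) - lpp ordp (snd y)"
  have "vec_terms (fst (smul (Poly_Mapping.single ty c) y)) = vec_terms (fst (smul (Poly_Mapping.single ty 1) y))"
    by (simp only: vec_terms_single_mult[OF c] vec_terms_single_mult[OF one_neq_zero])
  moreover have "vec_terms (fst (spoly ordp x y)) \<subseteq>
      vec_terms (fst (smul (Poly_Mapping.single tx 1) x)) \<union> vec_terms (fst (smul (Poly_Mapping.single ty c) y))"
    unfolding spoly_eq vec_terms_def tx_def ty_def c_def using keys_diff by fastforce
  ultimately show ?thesis by (simp add: pp_monom_def tx_def ty_def)
qed

lemma single_mult_spoly: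
  fixes x y :: "('v, 'k::field) vec \<times> ('v, 'k) mpoly"
  assumes e: "ax + lpp ordp (snd x) = ay + lpp ordp (snd y)"
  defines "s \<equiv> ax + lpp ordp (snd x) - pp_lcm (lpp ordp (snd x)) (lpp ordp (snd y))"
  shows "smul (Poly_Mapping.single s k) (spoly ordp x y)
     = pair_diff (smul (Poly_Mapping.single ax k) x)
         (smul (Poly_Mapping.single ay (k * (lc ordp (snd x) / lc ordp (snd y)))) y)"
proof -
  note factor = pp_lcm_factor[OF e, folded s_def]
  have "Poly_Mapping.single s k * (Poly_Mapping.single (pp_lcm (lpp ordp (snd x)) (lpp ordp (snd y)) - lpp ordp (snd x)) 1 * p)
      = Poly_Mapping.single ax k * p" for p :: "('v, 'k) mpoly"
    by (simp add: mult.assoc[symmetric] mult_single factor(1))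
  moreover have "Poly_Mapping.single s k * (Poly_Mapping.single (pp_lcm (lpp ordp (snd x)) (lpp ordp (snd y)) - lpp ordp (snd y)) d * p)
      = Poly_Mapping.single ay (k * d) * p" for p :: "('v, 'k) mpoly" and d
    by (simp add: mult.assoc[symmetric] mult_single factor(2))
  ultimately show ?thesis
    by (intro pair_eqI) (simp_all add: spoly_eq right_diff_distrib)
qed


section \<open>Representations by monomial multiples\<close>

definition is_monomial :: "('v, 'k::zero) mpoly \<Rightarrow> bool" where
  "is_monomial p \<longleftrightarrow> (\<exists>a c. p = Poly_Mapping.single a c)"

definition summand_vt :: "('v, 'k::comm_ring_1) mpoly \<times> (('v, 'k) vec \<times> ('v, 'k) mpoly) \<Rightarrow> ('v pp \<times> nat) set" where
  "summand_vt e = vec_terms (fst (smul (fst e) (snd e)))"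

definition summand_pt :: "('v, 'k::comm_ring_1) mpoly \<times> (('v, 'k) vec \<times> ('v, 'k) mpoly) \<Rightarrow> 'v pp set" where
  "summand_pt e = poly_terms (snd (smul (fst e) (snd e)))"

definition top_count :: "'v pp \<Rightarrow> (('v, 'k::comm_ring_1) mpoly \<times> (('v, 'k) vec \<times> ('v, 'k) mpoly)) list \<Rightarrow> nat" where
  "top_count T es = length (filter (\<lambda>e. T \<in> summand_pt e) es)"

lemma top_summand:
  fixes b :: "('v, 'k::field) vec \<times> ('v, 'k) mpoly"
  assumes po: "pp_term_order ordp"
    and T: "T \<in> summand_pt (Poly_Mapping.single a c, b)"
    and le: "\<forall>t\<in>summand_pt (Poly_Mapping.single a c, b). ordp t T"
  shows "c \<noteq> 0 \<and> snd b \<noteq> 0 \<and> T = a + lpp ordp (snd b)"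
proof -
  have c: "c \<noteq> 0" using T unfolding summand_pt_def poly_terms_def by auto
  have pt: "summand_pt (Poly_Mapping.single a c, b) = (\<lambda>\<beta>. a + \<beta>) ` Poly_Mapping.keys (snd b)"
    using poly_terms_single_mult[OF c, of a b] unfolding summand_pt_def poly_terms_def by simp
  then obtain \<beta> where \<beta>: "\<beta> \<in> Poly_Mapping.keys (snd b)" "T = a + \<beta>" using T by auto
  then have g: "snd b \<noteq> 0" by auto
  note lead = lpp_max[OF po g]
  have "ordp (a + lpp ordp (snd b)) T" using le pt lead by auto
  moreover have "ordp (\<beta> + a) (lpp ordp (snd b) + a)"
    using lead \<beta>(1) pp_term_order_compatible[OF po] unfolding add_compatible_def by blast
  then have "ordp T (a + lpp ordp (snd b))" using \<beta>(2) by (simp add: add.commute)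
  ultimately show ?thesis using c g lin_ord_antisym[OF pp_term_order_lin[OF po]] by simp
qed

(* A single summand reaching T cannot cancel, so the sum would contain T. *)
lemma top_count_not_one:
  assumes "Poly_Mapping.lookup (snd (lin_comb es)) T = 0"
  shows "top_count T es \<noteq> 1"
proof
  let ?P = "\<lambda>e. T \<in> summand_pt e"
  assume "top_count T es = 1"
  then obtain p b where single: "filter ?P es = [(p, b)]"
    unfolding top_count_def by (auto simp: length_Suc_conv)
  then have "(p, b) \<in> set (filter ?P es)" by simp
  then have "T \<in> Poly_Mapping.keys (p * snd b)" unfolding summand_pt_def poly_terms_def by simp
  then have "Poly_Mapping.lookup (snd (lin_comb (filter ?P es))) T \<noteq> 0"
    unfolding single by (simp add: lin_comb_single in_keys_iff)
  moreover have "Poly_Mapping.lookup (snd (lin_comb (filter (\<lambda>e. \<not> ?P e) es))) T = 0"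
    by (rule lookup_snd_lin_comb_zero) (auto simp: summand_pt_def poly_terms_def)
  ultimately have "Poly_Mapping.lookup (snd (lin_comb es)) T \<noteq> 0"
    by (subst lin_comb_filter[of _ ?P]) (simp add: lookup_add)
  then show False using assms by simp
qed


section \<open>The reduction argument\<close>

(* The hypotheses of lemma2. *)
locale std_rep_criterion =
  fixes ordp :: "('v::finite) pp \<Rightarrow> 'v pp \<Rightarrow> bool"
    and ordm :: "'v pp \<times> nat \<Rightarrow> 'v pp \<times> nat \<Rightarrow> bool"
    and m :: nat
    and fs :: "nat \<Rightarrow> ('v, 'k::field) mpoly"
    and G :: "(('v, 'k) vec \<times> ('v, 'k) mpoly) set"
    and u :: "('v, 'k) vec" and f :: "('v, 'k) mpoly"
  assumes po: "pp_term_order ordp"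
    and mo: "mod_term_order ordm"
    and G_M: "G \<subseteq> Mset m fs"
    and units: "\<forall>i<m. (unitv i, fs i) \<in> G"
    and uf_M: "(u, f) \<in> Mset m fs"
    and spoly_std: "\<forall>x\<in>G. \<forall>y\<in>G. crit_pair ordp ordm x y \<and>
           lpp_ge ordm (vec_terms u) (vec_terms (fst (smul (pp_monom (cp_mult1 ordp x y)) x)))
           \<longrightarrow> std_rep ordp ordm G (spoly ordp x y)"
begin

lemma linp: "lin_ord ordp"
  by (rule pp_term_order_lin[OF po])

lemma linm: "lin_ord ordm"
  by (rule mod_term_order_lin[OF mo])

lemma G_vec_zero: "b \<in> G \<Longrightarrow> \<forall>i\<ge>m. fst b i = 0"
  using G_M by (auto simp: Mset_def)

lemma finite_vec_terms_G: "b \<in> G \<Longrightarrow> finite (vec_terms (fst (smul p b)))"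
  by (rule finite_vec_terms[of m]) (simp add: G_vec_zero)

lemma finite_vec_terms_u: "finite (vec_terms u)"
  by (rule finite_vec_terms[of m]) (use uf_M in \<open>simp add: Mset_def\<close>)

lemma spoly_vec_zero: "x \<in> G \<Longrightarrow> y \<in> G \<Longrightarrow> \<forall>i\<ge>m. fst (spoly ordp x y) i = 0"
  by (simp add: spoly_eq G_vec_zero)

definition admissible :: "('v, 'k) mpoly \<times> (('v, 'k) vec \<times> ('v, 'k) mpoly) \<Rightarrow> bool" where
  "admissible e \<longleftrightarrow> snd e \<in> G \<and> is_monomial (fst e) \<and> dominates ordm (vec_terms u) (summand_vt e)"

definition below :: "'v pp \<Rightarrow> ('v, 'k) mpoly \<times> (('v, 'k) vec \<times> ('v, 'k) mpoly) \<Rightarrow> bool" where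
  "below T e \<longleftrightarrow> (\<forall>t\<in>summand_pt e. ordp t T)"

definition strictly_below :: "'v pp \<Rightarrow> ('v, 'k) mpoly \<times> (('v, 'k) vec \<times> ('v, 'k) mpoly) \<Rightarrow> bool" where
  "strictly_below T e \<longleftrightarrow> (\<forall>t\<in>summand_pt e. ordp t T \<and> t \<noteq> T)"

definition bounded_rep :: "'v pp \<Rightarrow> (('v, 'k) mpoly \<times> (('v, 'k) vec \<times> ('v, 'k) mpoly)) list \<Rightarrow> bool" where
  "bounded_rep T es \<longleftrightarrow> (\<forall>e\<in>set es. admissible e \<and> below T e) \<and> lin_comb es = (u, f)"

lemma scaled_std_rep:
  assumes z: "std_rep ordp ordm G z" and z_zero: "\<forall>i\<ge>m. fst z i = 0"
  shows "\<exists>S. lin_comb S = smul (Poly_Mapping.single s c) z \<and>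
    (\<forall>e\<in>set S. snd e \<in> G \<and> is_monomial (fst e) \<and>
       dominates ordm (shift_terms s (vec_terms (fst z))) (summand_vt e) \<and>
       dominates ordp ((+) s ` poly_terms (snd z)) (summand_pt e))"
proof -
  obtain qs where qs: "\<forall>(q, w)\<in>set qs. w \<in> G \<and>
        lpp_ge ordm (vec_terms (fst z)) (vec_terms (fst (smul q w))) \<and>
        lpp_ge ordp (poly_terms (snd z)) (poly_terms (snd (smul q w)))"
      and z_eq: "z = lin_comb qs"
    using z unfolding std_rep_def lin_comb_def by blast
  have summand: "snd e \<in> G \<and> is_monomial (fst e) \<and>
       dominates ordm (shift_terms s (vec_terms (fst z))) (summand_vt e) \<and>
       dominates ordp ((+) s ` poly_terms (snd z)) (summand_pt e)"
    if e_in: "e \<in> set (split_monomials s c qs)" for e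
  proof -
    obtain q w a where qw: "(q, w) \<in> set qs" and a: "a \<in> Poly_Mapping.keys q"
      and e: "e = (Poly_Mapping.single (s + a) (c * Poly_Mapping.lookup q a), w)"
      using split_monomials_mem[OF e_in] by blast
    have wG: "w \<in> G"
      and ge_v: "lpp_ge ordm (vec_terms (fst z)) (vec_terms (fst (smul q w)))"
      and ge_p: "lpp_ge ordp (poly_terms (snd z)) (poly_terms (q * snd w))"
      using qs qw by auto
    have dv: "dominates ordm (vec_terms (fst z)) (vec_terms (fst (smul q w)))"
      using ge_v lpp_ge_iff_dominates[OF linm finite_vec_terms[OF z_zero] finite_vec_terms_G[OF wG]]
      by blast
    have dp: "dominates ordp (poly_terms (snd z)) (poly_terms (q * snd w))"
      using ge_p lpp_ge_iff_dominates[OF linp finite_poly_terms finite_poly_terms] by blast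
    have "summand_vt e \<subseteq> shift_terms s (shift_terms a (vec_terms (fst w)))"
      using vec_terms_single_mult_subset[of "s + a" _ w] unfolding e summand_vt_def shift_terms_add
      by simp
    then have "dominates ordm (shift_terms s (vec_terms (fst (smul q w)))) (summand_vt e)"
      using dominates_shift_terms[OF mo vec_terms_mult_dominates[OF mo a]]
        dominates_subset[OF linm] dominates_trans[OF linm] by blast
    then have vt: "dominates ordm (shift_terms s (vec_terms (fst z))) (summand_vt e)"
      using dominates_shift_terms[OF mo dv] dominates_trans[OF linm] by blast
    have "(\<lambda>\<beta>. s + a + \<beta>) ` poly_terms (snd w) = (+) s ` ((+) a ` poly_terms (snd w))"
      by (simp add: image_image add.assoc)
    then have "summand_pt e \<subseteq> (+) s ` ((+) a ` poly_terms (snd w))"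
      using poly_terms_single_mult_subset[of "s + a" _ w] unfolding e summand_pt_def by simp
    then have "dominates ordp ((+) s ` poly_terms (q * snd w)) (summand_pt e)"
      using dominates_image_add[OF pp_term_order_compatible[OF po] poly_terms_mult_dominates[OF po a]]
        dominates_subset[OF linp] dominates_trans[OF linp] by blast
    then have pt: "dominates ordp ((+) s ` poly_terms (snd z)) (summand_pt e)"
      using dominates_image_add[OF pp_term_order_compatible[OF po] dp] dominates_trans[OF linp] by blast
    show ?thesis using wG vt pt unfolding e is_monomial_def by auto
  qed
  show ?thesis using summand lin_comb_split_monomials z_eq by blast
qed

lemma cancel_critical_pair:
  assumes xG: "x \<in> G" and yG: "y \<in> G" and cr: "crit_pair ordp ordm x y"
    and e: "ax + lpp ordp (snd x) = ay + lpp ordp (snd y)"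
    and dx: "dominates ordm (vec_terms u) (vec_terms (fst (smul (Poly_Mapping.single ax 1) x)))"
  shows "\<exists>S. (\<forall>e\<in>set S. admissible e \<and> strictly_below (ax + lpp ordp (snd x)) e) \<and>
    lin_comb S = pair_diff (smul (Poly_Mapping.single ax k) x)
      (smul (Poly_Mapping.single ay (k * (lc ordp (snd x) / lc ordp (snd y)))) y)"
proof -
  have gx: "snd x \<noteq> 0" and gy: "snd y \<noteq> 0" using cr unfolding crit_pair_def by auto
  define L where "L = pp_lcm (lpp ordp (snd x)) (lpp ordp (snd y))"
  define s where "s = ax + lpp ordp (snd x) - L"
  define Vx where "Vx = vec_terms (fst (smul (pp_monom (L - lpp ordp (snd x))) x))"
  define Vy where "Vy = vec_terms (fst (smul (pp_monom (L - lpp ordp (snd y))) y))"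
  have factor: "s + (L - lpp ordp (snd x)) = ax" "s + L = ax + lpp ordp (snd x)"
    using pp_lcm_factor(1,3)[OF e] unfolding s_def L_def by simp_all
  have Vx_shift: "vec_terms (fst (smul (Poly_Mapping.single ax 1) x)) = shift_terms s Vx"
    unfolding Vx_def pp_monom_def vec_terms_single_mult[OF one_neq_zero] shift_terms_add factor(1) ..
  (* the first multiplier of the critical pair is admissible, so the hypothesis applies *)
  have "dominates ordm (vec_terms u) Vx"
    using dx dominates_shift_terms_self[OF mo, of s Vx] dominates_trans[OF linm]
    unfolding Vx_shift by blast
  then have "lpp_ge ordm (vec_terms u) (vec_terms (fst (smul (pp_monom (cp_mult1 ordp x y)) x)))"
    using lpp_ge_iff_dominates[OF linm finite_vec_terms_u finite_vec_terms_G[OF xG]]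
    unfolding Vx_def L_def cp_mult1_def by simp
  then have "std_rep ordp ordm G (spoly ordp x y)" using spoly_std xG yG cr by blast
  then obtain S where S_sum: "lin_comb S = smul (Poly_Mapping.single s k) (spoly ordp x y)"
    and S: "\<forall>e\<in>set S. snd e \<in> G \<and> is_monomial (fst e) \<and>
       dominates ordm (shift_terms s (vec_terms (fst (spoly ordp x y)))) (summand_vt e) \<and>
       dominates ordp ((+) s ` poly_terms (snd (spoly ordp x y))) (summand_pt e)"
    using scaled_std_rep[OF _ spoly_vec_zero[OF xG yG]] by blast
  have "dominates ordm Vx Vy"
    using cr lpp_ge_iff_dominates[OF linm finite_vec_terms_G[OF xG] finite_vec_terms_G[OF yG]]
    unfolding crit_pair_def Let_def Vx_def Vy_def L_def by simp
  then have "dominates ordm Vx (vec_terms (fst (spoly ordp x y)))"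
    using dominates_union[OF linm] spoly_vec_terms[OF po gx gy] unfolding Vx_def Vy_def L_def by blast
  then have vt: "dominates ordm (vec_terms u) (shift_terms s (vec_terms (fst (spoly ordp x y))))"
    using dominates_shift_terms[OF mo] dx dominates_trans[OF linm] unfolding Vx_shift by blast
  have pt: "\<forall>t\<in>(+) s ` poly_terms (snd (spoly ordp x y)).
      ordp t (ax + lpp ordp (snd x)) \<and> t \<noteq> ax + lpp ordp (snd x)"
  proof
    fix t assume "t \<in> (+) s ` poly_terms (snd (spoly ordp x y))"
    then obtain \<zeta> where \<zeta>: "\<zeta> \<in> poly_terms (snd (spoly ordp x y))" and t: "t = s + \<zeta>" by blast
    have "ordp \<zeta> L \<and> \<zeta> \<noteq> L" using spoly_below_lcm[OF po gx gy \<zeta>] unfolding L_def .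
    then have "ordp (\<zeta> + s) (L + s) \<and> \<zeta> + s \<noteq> L + s"
      using pp_term_order_compatible[OF po] unfolding add_compatible_def by auto
    then show "ordp t (ax + lpp ordp (snd x)) \<and> t \<noteq> ax + lpp ordp (snd x)"
      using factor(2) t by (metis add.commute)
  qed
  have "admissible e \<and> strictly_below (ax + lpp ordp (snd x)) e" if "e \<in> set S" for e
  proof -
    have "dominates ordm (vec_terms u) (summand_vt e)"
      using S that vt dominates_trans[OF linm] by blast
    moreover have "strictly_below (ax + lpp ordp (snd x)) e"
      using S that dominates_strictly_below[OF linp _ pt] unfolding strictly_below_def by blast
    ultimately show ?thesis using S that unfolding admissible_def by blast
  qed
  moreover have "lin_comb S = pair_diff (smul (Poly_Mapping.single ax k) x)
      (smul (Poly_Mapping.single ay (k * (lc ordp (snd x) / lc ordp (snd y)))) y)"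
    using S_sum single_mult_spoly[OF e] unfolding s_def L_def by simp
  ultimately show ?thesis by blast
qed

(* The pair is critical in one of its two orders. *)
lemma cancel_pair:
  assumes adm1: "admissible (Poly_Mapping.single a1 c1, b1)" and adm2: "admissible (Poly_Mapping.single a2 c2, b2)"
    and c1: "c1 \<noteq> 0" and c2: "c2 \<noteq> 0" and g1: "snd b1 \<noteq> 0" and g2: "snd b2 \<noteq> 0"
    and e: "a1 + lpp ordp (snd b1) = a2 + lpp ordp (snd b2)"
  shows "\<exists>S. (\<forall>e\<in>set S. admissible e \<and> strictly_below (a1 + lpp ordp (snd b1)) e) \<and>
    lin_comb S = pair_diff (smul (Poly_Mapping.single a1 c1) b1)
      (smul (Poly_Mapping.single a2 (c1 * (lc ordp (snd b1) / lc ordp (snd b2)))) b2)"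
proof -
  have b1G: "b1 \<in> G" and b2G: "b2 \<in> G" using adm1 adm2 unfolding admissible_def by simp_all
  have unit_coeff: "summand_vt (Poly_Mapping.single a c, b) = vec_terms (fst (smul (Poly_Mapping.single a 1) b))"
    if "c \<noteq> 0" for a c and b :: "('v, 'k) vec \<times> ('v, 'k) mpoly"
    unfolding summand_vt_def
    by (simp only: fst_conv snd_conv vec_terms_single_mult[OF that] vec_terms_single_mult[OF one_neq_zero])
  have d1: "dominates ordm (vec_terms u) (vec_terms (fst (smul (Poly_Mapping.single a1 1) b1)))"
    using adm1 unit_coeff[OF c1] unfolding admissible_def by simp
  have d2: "dominates ordm (vec_terms u) (vec_terms (fst (smul (Poly_Mapping.single a2 1) b2)))"
    using adm2 unit_coeff[OF c2] unfolding admissible_def by simp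
  define L where "L = pp_lcm (lpp ordp (snd b1)) (lpp ordp (snd b2))"
  define V1 where "V1 = vec_terms (fst (smul (pp_monom (L - lpp ordp (snd b1))) b1))"
  define V2 where "V2 = vec_terms (fst (smul (pp_monom (L - lpp ordp (snd b2))) b2))"
  have "dominates ordm V1 V2 \<or> dominates ordm V2 V1"
    unfolding V1_def V2_def by (rule dominates_total[OF linm finite_vec_terms_G[OF b1G] finite_vec_terms_G[OF b2G]])
  then show ?thesis
  proof
    assume "dominates ordm V1 V2"
    then have "crit_pair ordp ordm b1 b2"
      using g1 g2 lpp_ge_iff_dominates[OF linm finite_vec_terms_G[OF b1G] finite_vec_terms_G[OF b2G]]
      unfolding crit_pair_def Let_def V1_def V2_def L_def by blast
    then show ?thesis by (rule cancel_critical_pair[OF b1G b2G _ e d1])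
  next
    assume "dominates ordm V2 V1"
    then have cr: "crit_pair ordp ordm b2 b1"
      using g1 g2 lpp_ge_iff_dominates[OF linm finite_vec_terms_G[OF b2G] finite_vec_terms_G[OF b1G]]
      unfolding crit_pair_def Let_def V1_def V2_def L_def by (simp add: pp_lcm_comm)
    define d where "d = c1 * (lc ordp (snd b1) / lc ordp (snd b2))"
    obtain S where S: "\<forall>e\<in>set S. admissible e \<and> strictly_below (a2 + lpp ordp (snd b2)) e"
      and S_sum: "lin_comb S = pair_diff (smul (Poly_Mapping.single a2 (- d)) b2)
          (smul (Poly_Mapping.single a1 (- d * (lc ordp (snd b2) / lc ordp (snd b1)))) b1)"
      using cancel_critical_pair[OF b2G b1G cr e[symmetric] d2, of "- d"] by blast
    have "- d * (lc ordp (snd b2) / lc ordp (snd b1)) = - c1"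
      unfolding d_def using lc_nonzero[OF po g1] lc_nonzero[OF po g2] by (simp add: field_simps)
    then have "lin_comb S = pair_diff (smul (Poly_Mapping.single a1 c1) b1) (smul (Poly_Mapping.single a2 d) b2)"
      unfolding S_sum by (intro pair_eqI) (simp_all add: single_uminus algebra_simps)
    then show ?thesis using S e unfolding d_def by auto
  qed
qed

(* Changing the nonzero coefficient of a summand creates no new terms. *)
lemma change_coefficient:
  fixes b :: "('v, 'k) vec \<times> ('v, 'k) mpoly"
  assumes adm: "admissible (Poly_Mapping.single a c, b)" and bel: "below T (Poly_Mapping.single a c, b)"
    and c: "c \<noteq> 0"
  shows "admissible (Poly_Mapping.single a c', b) \<and> below T (Poly_Mapping.single a c', b)"
proof -
  have "summand_vt (Poly_Mapping.single a c', b) \<subseteq> summand_vt (Poly_Mapping.single a c, b)"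
    and "summand_pt (Poly_Mapping.single a c', b) \<subseteq> summand_pt (Poly_Mapping.single a c, b)"
    using vec_terms_single_mult_subset[of a c' b] vec_terms_single_mult[OF c, of a b]
      poly_terms_single_mult_subset[of a c' b] poly_terms_single_mult[OF c, of a b]
    unfolding summand_vt_def summand_pt_def by simp_all
  then show ?thesis
    using adm bel dominates_trans[OF linm] dominates_subset[OF linm]
    unfolding admissible_def below_def is_monomial_def by auto
qed

(* Two summands reaching T are merged: the first is replaced by a multiple of
   the second plus summands strictly below T, decreasing the count at T. *)
lemma merge_top:
  assumes rep: "bounded_rep T es" and two: "2 \<le> top_count T es"
  shows "\<exists>es'. bounded_rep T es' \<and> top_count T es' < top_count T es"
proof -
  let ?P = "\<lambda>e. T \<in> summand_pt e"
  obtain e1 e2 L' where L: "filter ?P es = e1 # e2 # L'"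
    using two unfolding top_count_def by (auto simp: numeral_2_eq_2 Suc_le_length_iff)
  have top: "x \<in> set es \<and> ?P x" if "x \<in> set (e1 # e2 # L')" for x
    using that unfolding L[symmetric] by simp
  have good: "admissible x \<and> below T x" if "x \<in> set es" for x
    using rep that unfolding bounded_rep_def by blast
  obtain a1 c1 b1 where e1: "e1 = (Poly_Mapping.single a1 c1, b1)"
    using good[of e1] top[of e1] unfolding admissible_def is_monomial_def by (cases e1) auto
  obtain a2 c2 b2 where e2: "e2 = (Poly_Mapping.single a2 c2, b2)"
    using good[of e2] top[of e2] unfolding admissible_def is_monomial_def by (cases e2) auto
  have lead1: "c1 \<noteq> 0 \<and> snd b1 \<noteq> 0 \<and> T = a1 + lpp ordp (snd b1)"
    using top[of e1] good[of e1] by (intro top_summand[OF po]) (auto simp: e1 below_def)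
  have lead2: "c2 \<noteq> 0 \<and> snd b2 \<noteq> 0 \<and> T = a2 + lpp ordp (snd b2)"
    using top[of e2] good[of e2] by (intro top_summand[OF po]) (auto simp: e2 below_def)
  have adm1: "admissible e1" and adm2: "admissible e2" using good top by simp_all
  define d where "d = c1 * (lc ordp (snd b1) / lc ordp (snd b2))"
  obtain S where S: "\<forall>e\<in>set S. admissible e \<and> strictly_below T e"
    and S_sum: "lin_comb S = pair_diff (smul (Poly_Mapping.single a1 c1) b1) (smul (Poly_Mapping.single a2 d) b2)"
    using cancel_pair[OF adm1[unfolded e1] adm2[unfolded e2]] lead1 lead2 unfolding d_def by force
  define R where "R = filter (\<lambda>x. \<not> ?P x) es"
  define merged where "merged = (Poly_Mapping.single a2 (c2 + d), b2)"
  define es' where "es' = (L' @ [merged] @ S) @ R"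
  have merged_good: "admissible merged \<and> below T merged"
    unfolding merged_def by (rule change_coefficient) (use adm2 good[of e2] top[of e2] lead2 in \<open>auto simp: e2\<close>)
  have "admissible x \<and> below T x" if x: "x \<in> set es'" for x
  proof -
    consider "x \<in> set R" | "x \<in> set L'" | "x = merged" | "x \<in> set S"
      using x unfolding es'_def by auto
    then show ?thesis
    proof cases
      case 1
      then show ?thesis using good unfolding R_def by simp
    next
      case 2
      then show ?thesis using good top by simp
    next
      case 3
      then show ?thesis using merged_good by simp
    next
      case 4
      then show ?thesis using S unfolding strictly_below_def below_def by blast
    qed
  qed
  moreover have "lin_comb es' = (u, f)"
  proof -
    have "(u, f) = pair_add (lin_comb (filter ?P es)) (lin_comb R)"
      using rep lin_comb_filter[of es ?P] unfolding bounded_rep_def R_def by simp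
    then show ?thesis
      unfolding es'_def lin_comb_append[of _ R] merged_def lin_comb_merge[OF S_sum, symmetric]
      by (simp add: L e1 e2)
  qed
  moreover have "top_count T es' < top_count T es"
  proof -
    have "filter ?P R = []" unfolding R_def by (simp add: filter_empty_conv)
    moreover have "filter ?P L' = L'" using top by (simp add: filter_id_conv)
    moreover have "filter ?P S = []"
      using S unfolding strictly_below_def by (auto simp: filter_empty_conv)
    ultimately have "top_count T es' \<le> length L' + 1"
      unfolding es'_def top_count_def by simp
    moreover have "top_count T es = length L' + 2" unfolding top_count_def L by simp
    ultimately show ?thesis by simp
  qed
  ultimately show ?thesis unfolding bounded_rep_def by blast
qed

lemma std_rep_if_dominated:
  assumes adm: "\<forall>e\<in>set es. admissible e" and sum: "lin_comb es = (u, f)"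
    and dom: "\<forall>e\<in>set es. dominates ordp (poly_terms f) (summand_pt e)"
  shows "std_rep ordp ordm G (u, f)"
  unfolding std_rep_def
proof (intro exI conjI ballI)
  show "(u, f) = foldr (\<lambda>(p, b) acc. pair_add (smul p b) acc) es ((\<lambda>_. 0), 0)"
    using sum unfolding lin_comb_def by simp
  fix e assume e: "e \<in> set es"
  obtain p b where pb: "e = (p, b)" by (cases e)
  have bG: "b \<in> G" using adm e unfolding pb admissible_def by fastforce
  have "dominates ordm (vec_terms u) (vec_terms (fst (smul p b)))"
    using adm e unfolding pb admissible_def summand_vt_def by fastforce
  then have "lpp_ge ordm (vec_terms u) (vec_terms (fst (smul p b)))"
    using lpp_ge_iff_dominates[OF linm finite_vec_terms_u finite_vec_terms_G[OF bG]] by blast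
  moreover have "dominates ordp (poly_terms f) (poly_terms (snd (smul p b)))"
    using dom e unfolding pb summand_pt_def by fastforce
  then have "lpp_ge ordp (poly_terms f) (poly_terms (snd (smul p b)))"
    using lpp_ge_iff_dominates[OF linp finite_poly_terms finite_poly_terms] by blast
  ultimately show "case e of (p, b) \<Rightarrow> b \<in> G \<and>
      lpp_ge ordm (vec_terms (fst (u, f))) (vec_terms (fst (smul p b))) \<and>
      lpp_ge ordp (poly_terms (snd (u, f))) (poly_terms (snd (smul p b)))"
    using bG pb by simp
qed

lemma lower_bound:
  assumes rep: "bounded_rep T es" and none: "top_count T es = 0"
  shows "std_rep ordp ordm G (u, f) \<or> (\<exists>T'. ordp T' T \<and> T' \<noteq> T \<and> bounded_rep T' es)"
proof (cases "\<Union>(summand_pt ` set es) = {}")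
  case True
  then have "std_rep ordp ordm G (u, f)"
    using rep by (intro std_rep_if_dominated) (auto simp: bounded_rep_def dominates_def)
  then show ?thesis ..
next
  case False
  define T' where "T' = lt_of ordp (\<Union>(summand_pt ` set es))"
  have max: "T' \<in> \<Union>(summand_pt ` set es) \<and> (\<forall>t\<in>\<Union>(summand_pt ` set es). ordp t T')"
    unfolding T'_def by (rule lt_of_max[OF linp _ False]) (simp add: summand_pt_def)
  have "\<forall>e\<in>set es. T \<notin> summand_pt e" using none unfolding top_count_def by (simp add: filter_empty_conv)
  then have "ordp T' T \<and> T' \<noteq> T" using max rep unfolding bounded_rep_def below_def by blast
  moreover have "bounded_rep T' es" using rep max unfolding bounded_rep_def below_def by blast
  ultimately show ?thesis by blast
qed

lemma std_rep_at_bound: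
  assumes lower: "\<And>T' es'. ordp T' T \<Longrightarrow> T' \<noteq> T \<Longrightarrow> bounded_rep T' es' \<Longrightarrow> std_rep ordp ordm G (u, f)"
    and rep: "bounded_rep T es"
  shows "std_rep ordp ordm G (u, f)"
  using rep
proof (induction "top_count T es" arbitrary: es rule: less_induct)
  case less
  show ?case
  proof (cases "\<exists>\<zeta>\<in>poly_terms f. ordp T \<zeta>")
    case True
    then have "\<forall>e\<in>set es. dominates ordp (poly_terms f) (summand_pt e)"
      using less.prems lin_ord_trans[OF linp] unfolding bounded_rep_def below_def dominates_def by blast
    then show ?thesis using less.prems std_rep_if_dominated unfolding bounded_rep_def by blast
  next
    case False
    then have "Poly_Mapping.lookup (snd (lin_comb es)) T = 0"
      using less.prems lin_ord_refl[OF linp, of T]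
      unfolding bounded_rep_def poly_terms_def by (auto simp: in_keys_iff)
    then have "top_count T es \<noteq> 1" by (rule top_count_not_one)
    then consider "top_count T es = 0" | "2 \<le> top_count T es" by linarith
    then show ?thesis
    proof cases
      case 1
      then show ?thesis using lower_bound[OF less.prems] lower by blast
    next
      case 2
      then show ?thesis using merge_top[OF less.prems] less.hyps by blast
    qed
  qed
qed

lemma std_rep_if_bounded_rep:
  assumes "bounded_rep T es"
  shows "std_rep ordp ordm G (u, f)"
  using wf_pp_term_order[OF po] assms
proof (induction T arbitrary: es rule: wf_induct_rule)
  case (less T)
  then show ?case using std_rep_at_bound by blast
qed

lemma unit_expansion: "\<exists>es. (\<forall>e\<in>set es. admissible e) \<and> lin_comb es = (u, f)"
proof -
  define blk where "blk i = map (\<lambda>a. (Poly_Mapping.single a (Poly_Mapping.lookup (u i) a),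
      (unitv i :: ('v, 'k) vec, fs i))) (keys_list (u i))" for i
  define es where "es = concat (map blk [0..<m])"
  have u0: "\<forall>i\<ge>m. u i = 0" and fsum: "(\<Sum>i<m. u i * fs i) = f" using uf_M by (auto simp: Mset_def)
  have blk_sum: "lin_comb (blk i) = smul (u i) (unitv i, fs i)" for i
    using single_mult_monomial_sum[of 0 1 "u i"] unfolding blk_def by (simp add: lin_comb_same_element)
  have "lin_comb es = (u, f)"
  proof (rule pair_eqI)
    fix i
    have "fst (lin_comb es) i = (\<Sum>j\<in>{0..<m}. u j * unitv j i)"
      unfolding es_def fst_lin_comb_concat by (simp add: blk_sum o_def interv_sum_list_conv_sum_set_nat)
    also have "\<dots> = (\<Sum>j\<in>{0..<m}. if j = i then u i else 0)"
      by (rule sum.cong) (auto simp: unitv_def)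
    also have "\<dots> = u i" using u0 by (simp add: not_less)
    finally show "fst (lin_comb es) i = fst (u, f) i" by simp
  next
    have "snd (lin_comb es) = (\<Sum>j\<in>{0..<m}. u j * fs j)"
      unfolding es_def snd_lin_comb_concat by (simp add: blk_sum o_def interv_sum_list_conv_sum_set_nat)
    then show "snd (lin_comb es) = snd (u, f)" using fsum by (simp add: atLeast0LessThan)
  qed
  moreover have "admissible e" if e_in: "e \<in> set es" for e
  proof -
    obtain i a where i: "i < m" and a: "a \<in> Poly_Mapping.keys (u i)"
      and e: "e = (Poly_Mapping.single a (Poly_Mapping.lookup (u i) a), (unitv i, fs i))"
      using e_in unfolding es_def blk_def by (auto simp: keys_list)
    have "summand_vt e \<subseteq> shift_terms a (vec_terms (unitv i :: ('v, 'k) vec))"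
      using vec_terms_single_mult_subset[of a _ "(unitv i, fs i)"] unfolding e summand_vt_def by simp
    also have "\<dots> = {(a, i)}"
      unfolding shift_terms_def vec_terms_def unitv_def by (auto split: if_splits)
    also have "\<dots> \<subseteq> vec_terms u" using a unfolding vec_terms_def by simp
    finally show ?thesis
      using units i dominates_subset[OF linm] unfolding admissible_def is_monomial_def e by auto
  qed
  ultimately show ?thesis by blast
qed

lemma exists_bound: "\<exists>T. \<forall>e\<in>set es. below T e"
proof (cases "\<Union>(summand_pt ` set es) = {}")
  case True
  then show ?thesis unfolding below_def by blast
next
  case False
  then show ?thesis
    using lt_of_max[OF linp, of "\<Union>(summand_pt ` set es)"] unfolding below_def
    by (auto simp: summand_pt_def)
qed

end

theorem lemma2:
  fixes ordp :: "('v::finite) pp \<Rightarrow> 'v pp \<Rightarrow> bool"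
    and ordm :: "'v pp \<times> nat \<Rightarrow> 'v pp \<times> nat \<Rightarrow> bool"
    and m :: nat
    and fs :: "nat \<Rightarrow> ('v, 'k::field) mpoly"
    and G :: "(('v, 'k) vec \<times> ('v, 'k) mpoly) set"
    and u :: "('v, 'k) vec" and f :: "('v, 'k) mpoly"
  assumes "pp_term_order ordp"
    and "mod_term_order ordm"
    and "finite G"
    and "G \<subseteq> Mset m fs"
    and "\<forall>i<m. (unitv i, fs i) \<in> G"
    and "(u, f) \<in> Mset m fs"
    and "\<forall>x\<in>G. \<forall>y\<in>G. crit_pair ordp ordm x y \<and>
           lpp_ge ordm (vec_terms u) (vec_terms (fst (smul (pp_monom (cp_mult1 ordp x y)) x)))
           \<longrightarrow> std_rep ordp ordm G (spoly ordp x y)"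
  shows "std_rep ordp ordm G (u, f)"
proof -
  interpret std_rep_criterion ordp ordm m fs G u f
    by (rule std_rep_criterion.intro) (fact assms)+
  obtain es where adm: "\<forall>e\<in>set es. admissible e" and sum: "lin_comb es = (u, f)"
    using unit_expansion by blast
  obtain T where "\<forall>e\<in>set es. below T e" using exists_bound by blast
  then have "bounded_rep T es" using adm sum unfolding bounded_rep_def by blast
  then show ?thesis by (rule std_rep_if_bounded_rep)
qed

end
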